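(* Let $\Lambda'$, $\Lambda\subset\Lambda'$ and $Z$ be as in the context. Suppose $V$ is a finitely generated $\Lambda'$-module on which $Z$ acts by a character $\omega_V$, and $\sigma$ is a simple $\Lambda'$-module such that $Z$ acts on $\sigma$ by $\omega_\sigma=\omega_V$. Then $V|_\Lambda$ is finitely generated, $\sigma|_\Lambda$ is simple, and $$[V:\sigma]=[V|_\Lambda:\sigma|_\Lambda],$$ where $[V:\sigma]$ denotes the multiplicity of $\sigma$ as a Jordan--Hölder factor of $V$ (and similarly over $\Lambda$).
   Context: Let $\mathbb{F}$ be a field of characteristic $p$, sufficiently large so that all simple modules considered are absolutely simple. $\Lambda'$ is an Artinian $\mathbb F$-algebra, $\Lambda\subset\Lambda'$ a subalgebra, and $Z$ a finite subgroup of the group of units of the center of $\Lambda'$, of order prime to $p$. Put $Y:=Z/(\Lambda\cap Z)$. It is assumed that $\Lambda'$ is a crossed product $\Lambda*Y$: there is a set $\widetilde Y=\{\widetilde y:y\in Y\}$ of units of $\Lambda'$ (the image of a set-theoretic section $Y\to Z$ sending $1$ to $1$) with $|\widetilde Y|=|Y|$, such that $\Lambda'$ is free as a left and as a right $\Lambda$-module with basis $\widetilde Y$, $\widetilde{1_Y}=1$, and for $y_1,y_2\in Y$, $\widetilde{y_1}\Lambda=\Lambda\widetilde{y_1}$ and $\widetilde{y_1}\widetilde{y_2}\Lambda=\widetilde{y_1y_2}\Lambda$. Modules are left modules. A simple $\Lambda'$-module has a central character on $Z$, denoted $\omega_\sigma$. *)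

theory Defs
  imports Main
begin

text \<open>Lambda' is the whole ring type 'a; its F-algebra structure is a ring homomorphism
  iota from the field type 'f into the centre of 'a.\<close>

definition alg_embedding :: "('f::field \<Rightarrow> 'a::ring_1) \<Rightarrow> bool" where
  "alg_embedding \<iota> \<longleftrightarrow> \<iota> 1 = 1 \<and> (\<forall>c d. \<iota> (c + d) = \<iota> c + \<iota> d) \<and>
     (\<forall>c d. \<iota> (c * d) = \<iota> c * \<iota> d) \<and> (\<forall>c a. \<iota> c * a = a * \<iota> c)"

definition subalgebra :: "('f::field \<Rightarrow> 'a::ring_1) \<Rightarrow> 'a set \<Rightarrow> bool" where
  "subalgebra \<iota> L \<longleftrightarrow> 1 \<in> L \<and> (\<forall>c. \<iota> c \<in> L) \<and> (\<forall>x\<in>L. \<forall>y\<in>L. x + y \<in> L \<and> x * y \<in> L)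
     \<and> (\<forall>x\<in>L. - x \<in> L)"

definition left_ideal :: "'a::ring_1 set \<Rightarrow> bool" where
  "left_ideal I \<longleftrightarrow> 0 \<in> I \<and> (\<forall>x\<in>I. \<forall>y\<in>I. x + y \<in> I) \<and> (\<forall>x\<in>I. - x \<in> I)
     \<and> (\<forall>a. \<forall>x\<in>I. a * x \<in> I)"

definition left_artinian :: "'a::ring_1 itself \<Rightarrow> bool" where
  "left_artinian _ \<longleftrightarrow> \<not> (\<exists>f :: nat \<Rightarrow> 'a set. \<forall>n. left_ideal (f n) \<and> f (Suc n) \<subset> f n)"

definition central_unit_subgroup :: "'a::ring_1 set \<Rightarrow> bool" where
  "central_unit_subgroup Z \<longleftrightarrow> finite Z \<and> 1 \<in> Z \<and> (\<forall>z\<in>Z. \<forall>w\<in>Z. z * w \<in> Z) \<and>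
     (\<forall>z\<in>Z. (\<forall>a. z * a = a * z) \<and> (\<exists>w\<in>Z. z * w = 1))"

definition ycoset :: "'a::ring_1 set \<Rightarrow> 'a set \<Rightarrow> 'a \<Rightarrow> 'a set" where
  "ycoset L Z z = (\<lambda>w. z * w) ` (L \<inter> Z)"

definition Yq :: "'a::ring_1 set \<Rightarrow> 'a set \<Rightarrow> 'a set set" where
  "Yq L Z = ycoset L Z ` Z"

definition ymul :: "'a::ring_1 set \<Rightarrow> 'a set \<Rightarrow> ('a set \<Rightarrow> 'a) \<Rightarrow> 'a set \<Rightarrow> 'a set \<Rightarrow> 'a set" where
  "ymul L Z sec y1 y2 = ycoset L Z (sec y1 * sec y2)"

text \<open>sec is a set-theoretic section Y -> Z of the quotient map, with sec 1 = 1; its image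
  Ytilde is a basis of Lambda' as a free left and as a free right Lambda-module, etc.\<close>
definition crossed_product :: "'a::ring_1 set \<Rightarrow> 'a set \<Rightarrow> ('a set \<Rightarrow> 'a) \<Rightarrow> bool" where
  "crossed_product L Z sec \<longleftrightarrow>
     (\<forall>y\<in>Yq L Z. sec y \<in> y) \<and> sec (ycoset L Z 1) = 1 \<and>
     card (sec ` Yq L Z) = card (Yq L Z) \<and>
     (\<forall>x. \<exists>!c. (\<forall>t. t \<notin> sec ` Yq L Z \<longrightarrow> c t = 0) \<and> (\<forall>t\<in>sec ` Yq L Z. c t \<in> L) \<and>
            x = (\<Sum>t\<in>sec ` Yq L Z. c t * t)) \<and>
     (\<forall>x. \<exists>!c. (\<forall>t. t \<notin> sec ` Yq L Z \<longrightarrow> c t = 0) \<and> (\<forall>t\<in>sec ` Yq L Z. c t \<in> L) \<and>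
            x = (\<Sum>t\<in>sec ` Yq L Z. t * c t)) \<and>
     (\<forall>y\<in>Yq L Z. (\<lambda>l. sec y * l) ` L = (\<lambda>l. l * sec y) ` L) \<and>
     (\<forall>y1\<in>Yq L Z. \<forall>y2\<in>Yq L Z.
        (\<lambda>l. sec y1 * sec y2 * l) ` L = (\<lambda>l. sec (ymul L Z sec y1 y2) * l) ` L)"

text \<open>A left Lambda'-module is an abelian group type 'v with an action act.
  Notions relative to a subring R (restriction to R) take R as a parameter.\<close>

definition lmodule :: "('a::ring_1 \<Rightarrow> 'v::ab_group_add \<Rightarrow> 'v) \<Rightarrow> bool" where
  "lmodule act \<longleftrightarrow> (\<forall>a x y. act a (x + y) = act a x + act a y) \<and>
     (\<forall>a b x. act (a + b) x = act a x + act b x) \<and>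
     (\<forall>a b x. act (a * b) x = act a (act b x)) \<and> (\<forall>x. act 1 x = x)"

definition submod :: "'a::ring_1 set \<Rightarrow> ('a \<Rightarrow> 'v::ab_group_add \<Rightarrow> 'v) \<Rightarrow> 'v set \<Rightarrow> bool" where
  "submod R act N \<longleftrightarrow> 0 \<in> N \<and> (\<forall>x\<in>N. \<forall>y\<in>N. x + y \<in> N) \<and> (\<forall>x\<in>N. - x \<in> N) \<and>
     (\<forall>a\<in>R. \<forall>x\<in>N. act a x \<in> N)"

definition simple_mod :: "'a::ring_1 set \<Rightarrow> ('a \<Rightarrow> 'v::ab_group_add \<Rightarrow> 'v) \<Rightarrow> bool" where
  "simple_mod R act \<longleftrightarrow> (UNIV :: 'v set) \<noteq> {0} \<and>
     (\<forall>N. submod R act N \<longrightarrow> N = {0} \<or> N = UNIV)"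

definition span_mod :: "'a::ring_1 set \<Rightarrow> ('a \<Rightarrow> 'v::ab_group_add \<Rightarrow> 'v) \<Rightarrow> 'v set \<Rightarrow> 'v set" where
  "span_mod R act S = \<Inter> {N. submod R act N \<and> S \<subseteq> N}"

definition fin_gen :: "'a::ring_1 set \<Rightarrow> ('a \<Rightarrow> 'v::ab_group_add \<Rightarrow> 'v) \<Rightarrow> bool" where
  "fin_gen R act \<longleftrightarrow> (\<exists>S. finite S \<and> span_mod R act S = UNIV)"

definition mod_hom_on :: "'a::ring_1 set \<Rightarrow> ('a \<Rightarrow> 'v::ab_group_add \<Rightarrow> 'v) \<Rightarrow>
    ('a \<Rightarrow> 'w::ab_group_add \<Rightarrow> 'w) \<Rightarrow> 'v set \<Rightarrow> ('v \<Rightarrow> 'w) \<Rightarrow> bool" where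
  "mod_hom_on R act act' N f \<longleftrightarrow> (\<forall>x\<in>N. \<forall>y\<in>N. f (x + y) = f x + f y) \<and>
     (\<forall>a\<in>R. \<forall>x\<in>N. f (act a x) = act' a (f x))"

text \<open>Composition series 0 = M_0 < M_1 < ... < M_n = V with simple subquotients
  (M_{i+1}/M_i simple iff there is no submodule strictly in between).\<close>
definition comp_series :: "'a::ring_1 set \<Rightarrow> ('a \<Rightarrow> 'v::ab_group_add \<Rightarrow> 'v) \<Rightarrow> 'v set list \<Rightarrow> bool" where
  "comp_series R act cs \<longleftrightarrow> cs \<noteq> [] \<and> hd cs = {0} \<and> last cs = UNIV \<and>
     (\<forall>i < length cs. submod R act (cs ! i)) \<and>
     (\<forall>i. Suc i < length cs \<longrightarrow> cs ! i \<subset> cs ! Suc i \<and>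
        (\<forall>N. submod R act N \<and> cs ! i \<subseteq> N \<and> N \<subseteq> cs ! Suc i \<longrightarrow> N = cs ! i \<or> N = cs ! Suc i))"

text \<open>B/A is isomorphic to the module (s, actS): there is a surjective homomorphism B -> s
  with kernel A.\<close>
definition factor_iso :: "'a::ring_1 set \<Rightarrow> ('a \<Rightarrow> 'v::ab_group_add \<Rightarrow> 'v) \<Rightarrow>
    ('a \<Rightarrow> 's::ab_group_add \<Rightarrow> 's) \<Rightarrow> 'v set \<Rightarrow> 'v set \<Rightarrow> bool" where
  "factor_iso R act actS A B \<longleftrightarrow>
     (\<exists>f. mod_hom_on R act actS B f \<and> f ` B = UNIV \<and> {x \<in> B. f x = 0} = A)"

definition jh_mult :: "'a::ring_1 set \<Rightarrow> ('a \<Rightarrow> 'v::ab_group_add \<Rightarrow> 'v) \<Rightarrow>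
    ('a \<Rightarrow> 's::ab_group_add \<Rightarrow> 's) \<Rightarrow> nat" where
  "jh_mult R act actS = (SOME n. \<exists>cs. comp_series R act cs \<and>
      n = card {i. Suc i < length cs \<and> factor_iso R act actS (cs ! i) (cs ! Suc i)})"

definition central_char :: "('f::field \<Rightarrow> 'a::ring_1) \<Rightarrow> 'a set \<Rightarrow> ('a \<Rightarrow> 'f) \<Rightarrow>
    ('a \<Rightarrow> 'v::ab_group_add \<Rightarrow> 'v) \<Rightarrow> bool" where
  "central_char \<iota> Z \<omega> act \<longleftrightarrow> (\<forall>z\<in>Z. \<omega> z \<noteq> 0) \<and>
     (\<forall>z1\<in>Z. \<forall>z2\<in>Z. \<omega> (z1 * z2) = \<omega> z1 * \<omega> z2) \<and>
     (\<forall>z\<in>Z. \<forall>v. act z v = act (\<iota> (\<omega> z)) v)"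

definition abs_simple :: "('f::field \<Rightarrow> 'a::ring_1) \<Rightarrow> ('a \<Rightarrow> 's::ab_group_add \<Rightarrow> 's) \<Rightarrow> bool" where
  "abs_simple \<iota> act \<longleftrightarrow> simple_mod UNIV act \<and>
     (\<forall>f. mod_hom_on UNIV act act UNIV f \<longrightarrow> (\<exists>c. \<forall>s. f s = act (\<iota> c) s))"

end

theory Submission
  imports Defs
begin

text \<open>Write \<open>a \<in> \<Lambda>'\<close> as \<open>\<Sum> c\<^sub>t t\<close> with \<open>c\<^sub>t \<in> \<Lambda>\<close> and \<open>t\<close> in the section \<open>Y \<rightarrow> Z\<close>. On a module
  with central character \<open>\<omega>\<close> every \<open>t \<in> Z\<close> acts as the scalar \<open>\<omega> t\<close>, so \<open>a\<close> acts as the element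
  \<open>\<Sum> c\<^sub>t \<omega>(t)\<close> of \<open>\<Lambda>\<close>; this element depends only on \<open>a\<close> and \<open>\<omega>\<close>, hence serves \<open>V\<close> and \<open>\<sigma>\<close>
  simultaneously. Consequently \<open>\<Lambda>\<close> and \<open>\<Lambda>'\<close> have the same submodules of \<open>V\<close> and \<open>\<sigma>\<close> and the same
  homomorphisms between their subquotients, and all three claims follow.\<close>

lemma lmodule_act_zero:
  assumes "lmodule act"
  shows "act 0 v = 0"
proof -
  have "act (0 + 0) v = act 0 v + act 0 v"
    using assms unfolding lmodule_def by blast
  then show ?thesis by simp
qed

lemma lmodule_act_sum:
  assumes "lmodule act"
  shows "act (sum g T) v = (\<Sum>t\<in>T. act (g t) v)"
proof (cases "finite T")
  case True
  then show ?thesis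
    by (induction T rule: finite_induct)
       (use assms lmodule_act_zero in \<open>auto simp: lmodule_def\<close>)
qed (simp add: lmodule_act_zero[OF assms])

lemma subalgebra_zero:
  assumes "subalgebra \<iota> L"
  shows "0 \<in> L"
proof -
  have "1 \<in> L" "- 1 \<in> L"
    using assms unfolding subalgebra_def by auto
  then have "1 + - 1 \<in> L"
    using assms unfolding subalgebra_def by blast
  then show ?thesis by simp
qed

lemma subalgebra_sum:
  assumes "subalgebra \<iota> L" and "\<And>t. t \<in> T \<Longrightarrow> g t \<in> L"
  shows "sum g T \<in> L"
proof (cases "finite T")
  case True
  then show ?thesis
    using assms(2)
    by (induction T rule: finite_induct)
       (use assms(1) subalgebra_zero in \<open>auto simp: subalgebra_def\<close>)
qed (simp add: subalgebra_zero[OF assms(1)])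

lemma crossed_product_section_in_Z:
  assumes "central_unit_subgroup Z" and "crossed_product L Z sec"
  shows "sec ` Yq L Z \<subseteq> Z"
proof
  fix t assume "t \<in> sec ` Yq L Z"
  then obtain y where y: "y \<in> Yq L Z" "t = sec y" by auto
  then obtain z where z: "z \<in> Z" "y = ycoset L Z z" unfolding Yq_def by auto
  have "\<forall>y\<in>Yq L Z. sec y \<in> y"
    using assms(2) unfolding crossed_product_def by (rule conjunct1)
  then have "t \<in> y"
    using y by simp
  then obtain w where "w \<in> Z" "t = z * w"
    using z unfolding ycoset_def by auto
  then show "t \<in> Z"
    using assms(1) z(1) unfolding central_unit_subgroup_def by blast
qed

lemma crossed_product_left_expansion:
  assumes "crossed_product L Z sec"
  obtains c where "\<And>t. t \<in> sec ` Yq L Z \<Longrightarrow> c t \<in> L"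
    and "a = (\<Sum>t\<in>sec ` Yq L Z. c t * t)"
proof -
  have "\<forall>x. \<exists>!c. (\<forall>t. t \<notin> sec ` Yq L Z \<longrightarrow> c t = 0) \<and> (\<forall>t\<in>sec ` Yq L Z. c t \<in> L) \<and>
          x = (\<Sum>t\<in>sec ` Yq L Z. c t * t)"
    using assms unfolding crossed_product_def by (elim conjE)
  then obtain c where "\<forall>t\<in>sec ` Yq L Z. c t \<in> L" "a = (\<Sum>t\<in>sec ` Yq L Z. c t * t)"
    by (meson ex1_implies_ex)
  then show ?thesis
    using that by blast
qed

lemma central_char_act_sum:
  assumes "lmodule act" and "central_char \<iota> Z \<omega> act" and "T \<subseteq> Z"
  shows "act (\<Sum>t\<in>T. c t * t) = act (\<Sum>t\<in>T. c t * \<iota> (\<omega> t))"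
proof
  fix v
  have "act (c t * t) v = act (c t * \<iota> (\<omega> t)) v" if "t \<in> T" for t
  proof -
    have "act t = act (\<iota> (\<omega> t))"
      using assms(2,3) that unfolding central_char_def by blast
    then show ?thesis
      using assms(1) unfolding lmodule_def by simp
  qed
  then show "act (\<Sum>t\<in>T. c t * t) v = act (\<Sum>t\<in>T. c t * \<iota> (\<omega> t)) v"
    by (simp add: lmodule_act_sum[OF assms(1)])
qed

lemma crossed_product_acts_through_subalgebra:
  assumes "subalgebra \<iota> L" and "central_unit_subgroup Z" and "crossed_product L Z sec"
    and "lmodule act" and "central_char \<iota> Z \<omega> act"
    and "lmodule act'" and "central_char \<iota> Z \<omega> act'"
  shows "\<exists>l\<in>L. act a = act l \<and> act' a = act' l"
proof -
  let ?T = "sec ` Yq L Z"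
  obtain c where c: "\<And>t. t \<in> ?T \<Longrightarrow> c t \<in> L" and a: "a = (\<Sum>t\<in>?T. c t * t)"
    using crossed_product_left_expansion[OF assms(3)] by blast
  have TZ: "?T \<subseteq> Z"
    using crossed_product_section_in_Z[OF assms(2,3)] .
  have "(\<Sum>t\<in>?T. c t * \<iota> (\<omega> t)) \<in> L"
    using assms(1) c by (intro subalgebra_sum) (auto simp: subalgebra_def)
  moreover have "act a = act (\<Sum>t\<in>?T. c t * \<iota> (\<omega> t))"
    unfolding a using assms(4,5) TZ by (rule central_char_act_sum)
  moreover have "act' a = act' (\<Sum>t\<in>?T. c t * \<iota> (\<omega> t))"
    unfolding a using assms(6,7) TZ by (rule central_char_act_sum)
  ultimately show ?thesis by blast
qed

lemma submod_eq_UNIV_if_acts_through: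
  assumes "\<And>a. \<exists>l\<in>L. act a = act l"
  shows "submod L act = submod UNIV act"
proof
  fix N
  have "(\<forall>a\<in>L. \<forall>x\<in>N. act a x \<in> N) \<longleftrightarrow> (\<forall>a. \<forall>x\<in>N. act a x \<in> N)"
    using assms by (metis UNIV_I)
  then show "submod L act N = submod UNIV act N"
    unfolding submod_def by simp
qed

lemma mod_hom_on_eq_UNIV_if_acts_through:
  assumes "\<And>a. \<exists>l\<in>L. act a = act l \<and> act' a = act' l"
  shows "mod_hom_on L act act' = mod_hom_on UNIV act act'"
proof (intro ext)
  fix N f
  have "(\<forall>a\<in>L. \<forall>x\<in>N. f (act a x) = act' a (f x)) \<longleftrightarrow> (\<forall>a. \<forall>x\<in>N. f (act a x) = act' a (f x))"
    using assms by metis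
  then show "mod_hom_on L act act' N f = mod_hom_on UNIV act act' N f"
    unfolding mod_hom_on_def by simp
qed

theorem corollary5p5:
  fixes \<iota> :: "'f::field \<Rightarrow> 'a::ring_1"
    and L Z :: "'a set"
    and sec :: "'a set \<Rightarrow> 'a"
    and \<omega> :: "'a \<Rightarrow> 'f"
    and act :: "'a \<Rightarrow> 'v::ab_group_add \<Rightarrow> 'v"
    and actS :: "'a \<Rightarrow> 's::ab_group_add \<Rightarrow> 's"
  assumes "alg_embedding \<iota>"
    and "left_artinian TYPE('a)"
    and "subalgebra \<iota> L"
    and "central_unit_subgroup Z"
    and "\<not> CHAR('f) dvd card Z"
    and "crossed_product L Z sec"
    and "lmodule act" and "fin_gen UNIV act" and "central_char \<iota> Z \<omega> act"
    and "lmodule actS" and "simple_mod UNIV actS" and "central_char \<iota> Z \<omega> actS"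
    and "abs_simple \<iota> actS"
  shows "fin_gen L act \<and> simple_mod L actS \<and> jh_mult UNIV act actS = jh_mult L act actS"
proof -
  have through: "\<exists>l\<in>L. act a = act l \<and> actS a = actS l" for a
    using crossed_product_acts_through_subalgebra[OF assms(3,4,6,7,9,10,12)] .
  have submod_V: "submod L act = submod UNIV act"
    using through by (metis submod_eq_UNIV_if_acts_through)
  have submod_\<sigma>: "submod L actS = submod UNIV actS"
    using through by (metis submod_eq_UNIV_if_acts_through)
  have hom: "mod_hom_on L act actS = mod_hom_on UNIV act actS"
    using through by (rule mod_hom_on_eq_UNIV_if_acts_through)
  have "fin_gen L act"
    using assms(8) unfolding fin_gen_def span_mod_def submod_V .
  moreover have "simple_mod L actS"
    using assms(11) unfolding simple_mod_def submod_\<sigma> .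
  moreover have "jh_mult UNIV act actS = jh_mult L act actS"
    unfolding jh_mult_def comp_series_def factor_iso_def submod_V hom ..
  ultimately show ?thesis by blast
qed

end
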